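(* Let $\Lambda$ be a group. For all $w,w'\in\mathcal{A}^1_\Lambda$: (i) $d_\ast(w\,\overline{\ast}\,w')=d_\ast(w)\ast d_\ast(w')$; (i)$'$ $d_\ast^{-1}(w\ast w')=d_\ast^{-1}(w)\,\overline{\ast}\,d_\ast^{-1}(w')$; (ii) $d_\ast(w\,\dot{\overline{\ast}}\,w')=d_\ast(w)\,\dot{\ast}\,d_\ast(w')$; (ii)$'$ $d_\ast^{-1}(w\,\dot\ast\,w')=d_\ast^{-1}(w)\,\dot{\overline{\ast}}\,d_\ast^{-1}(w')$.
   Context: $\mathcal{A}_\Lambda=\mathbb{Q}\langle x,y_s\mid s\in\Lambda\rangle$, $\mathcal{A}^1_\Lambda=\mathbb{Q}+\sum_s\mathcal{A}_\Lambda y_s$, $z_{k,s}=x^{k-1}y_s$. $\gamma$ is the algebra automorphism with $\gamma(x)=x$, $\gamma(y_s)=x+y_s$; $d_{\mathrm{sh}}$ is the $\mathbb{Q}$-linear map on $\mathcal{A}^1_\Lambda$ with $d_{\mathrm{sh}}(1)=1$ and $d_{\mathrm{sh}}(uy_s)=\gamma(u)y_s$. $\mathcal{I}$, $\mathcal{I}^{-1}$ are the $\mathbb{Q}$-linear maps with $\mathcal{I}(1)=\mathcal{I}^{-1}(1)=1$, $\mathcal{I}(z_{k_1,s_1}\cdots z_{k_n,s_n})=z_{k_1,s_1}z_{k_2,s_1s_2}\cdots z_{k_n,s_1\cdots s_n}$, $\mathcal{I}^{-1}(z_{k_1,s_1}\cdots z_{k_n,s_n})=z_{k_1,s_1}z_{k_2,s_2/s_1}\cdots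 z_{k_n,s_n/s_{n-1}}$. $d_\ast=\mathcal{I}^{-1}d_{\mathrm{sh}}\mathcal{I}$ (a bijection of $\mathcal{A}^1_\Lambda$). All four products are $\mathbb{Q}$-bilinear on $\mathcal{A}^1_\Lambda$ with $1$ as unit, and for words $w,w'$: $z_{k,s}w\ast z_{l,t}w'=z_{k,s}(w\ast z_{l,t}w')+z_{l,t}(z_{k,s}w\ast w')+z_{k+l,st}(w\ast w')$; $z_{k,s}w\,\overline\ast\,z_{l,t}w'=z_{k,s}(w\,\overline\ast\,z_{l,t}w')+z_{l,t}(z_{k,s}w\,\overline\ast\,w')-z_{k+l,st}(w\,\overline\ast\,w')$; $z_{k,s}w\,\dot\ast\,z_{l,t}w'=z_{k+l,st}(w\ast w')$; $z_{k,s}w\,\dot{\overline\ast}\,z_{l,t}w'=z_{k+l,st}(w\,\overline\ast\,w')$. *)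

theory Defs
  imports Complex_Main
begin

text \<open>The free algebra A_Lambda = Q<x, y_s | s in Lambda>.  Words are lists of letters;
  an element of A_Lambda is a finitely supported function from words to rat.
  The (abelian) group Lambda is written additively: st is s + t, t/s is t - s.\<close>

datatype 'g letter = X | Y 'g

type_synonym 'g word = "'g letter list"
type_synonym 'g poly = "'g word \<Rightarrow> rat"

text \<open>z-words: z_{k,s} is encoded as the pair (k, s), k >= 1.\<close>
type_synonym 'g zword = "(nat \<times> 'g) list"

definition wd :: "'a \<Rightarrow> 'a \<Rightarrow> rat" where
  "wd u = (\<lambda>v. if v = u then 1 else 0)"

definition lin :: "('a \<Rightarrow> 'b \<Rightarrow> rat) \<Rightarrow> ('a \<Rightarrow> rat) \<Rightarrow> 'b \<Rightarrow> rat" where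
  "lin f P = (\<lambda>v. \<Sum>u\<in>{u. P u \<noteq> 0}. P u * f u v)"

definition bil :: "('a \<Rightarrow> 'a \<Rightarrow> 'b \<Rightarrow> rat) \<Rightarrow> ('a \<Rightarrow> rat) \<Rightarrow> ('a \<Rightarrow> rat) \<Rightarrow> 'b \<Rightarrow> rat" where
  "bil f P Q = (\<lambda>v. \<Sum>u\<in>{u. P u \<noteq> 0}. \<Sum>u'\<in>{u'. Q u' \<noteq> 0}. P u * Q u' * f u u' v)"

text \<open>The subspace A^1_Lambda = Q + sum_s A_Lambda y_s.\<close>
definition A1 :: "'g poly set" where
  "A1 = {P. finite {u. P u \<noteq> 0} \<and> (\<forall>u. P u \<noteq> 0 \<longrightarrow> u = [] \<or> (\<exists>s. last u = Y s))}"

definition toW :: "'g zword \<Rightarrow> 'g word" where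
  "toW w = concat (map (\<lambda>(k, s). replicate (k - 1) X @ [Y s]) w)"

fun parse :: "nat \<Rightarrow> 'g word \<Rightarrow> 'g zword" where
  "parse k [] = []"
| "parse k (X # u) = parse (Suc k) u"
| "parse k (Y s # u) = (k, s) # parse 1 u"

definition liftZ :: "('g zword \<Rightarrow> rat) \<Rightarrow> 'g poly" where
  "liftZ R = (\<lambda>w. if w = [] \<or> (\<exists>s. last w = Y s) then R (parse 1 w) else 0)"

definition cons_poly :: "'a \<Rightarrow> ('a list \<Rightarrow> rat) \<Rightarrow> 'a list \<Rightarrow> rat" where
  "cons_poly a P = (\<lambda>u. case u of [] \<Rightarrow> 0 | b # u' \<Rightarrow> if b = a then P u' else 0)"

text \<open>Harmonic-type products on z-words; c = 1 gives the stuffle product,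
  c = -1 gives the product with the minus sign.\<close>
fun zprod :: "rat \<Rightarrow> ('g::ab_group_add) zword \<Rightarrow> 'g zword \<Rightarrow> 'g zword \<Rightarrow> rat" where
  "zprod c [] v = wd v"
| "zprod c ((k, s) # w) [] = wd ((k, s) # w)"
| "zprod c ((k, s) # w) ((l, t) # v) =
     (\<lambda>u. cons_poly (k, s) (zprod c w ((l, t) # v)) u
        + cons_poly (l, t) (zprod c ((k, s) # w) v) u
        + c * cons_poly (k + l, s + t) (zprod c w v) u)"

fun zdot :: "rat \<Rightarrow> ('g::ab_group_add) zword \<Rightarrow> 'g zword \<Rightarrow> 'g zword \<Rightarrow> rat" where
  "zdot c [] v = wd v"
| "zdot c ((k, s) # w) [] = wd ((k, s) # w)"
| "zdot c ((k, s) # w) ((l, t) # v) = cons_poly (k + l, s + t) (zprod c w v)"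

definition stuffle :: "('g::ab_group_add) poly \<Rightarrow> 'g poly \<Rightarrow> 'g poly" where
  "stuffle = bil (\<lambda>u v. liftZ (zprod 1 (parse 1 u) (parse 1 v)))"

definition stuffle_bar :: "('g::ab_group_add) poly \<Rightarrow> 'g poly \<Rightarrow> 'g poly" where
  "stuffle_bar = bil (\<lambda>u v. liftZ (zprod (-1) (parse 1 u) (parse 1 v)))"

definition stuffle_dot :: "('g::ab_group_add) poly \<Rightarrow> 'g poly \<Rightarrow> 'g poly" where
  "stuffle_dot = bil (\<lambda>u v. liftZ (zdot 1 (parse 1 u) (parse 1 v)))"

definition stuffle_bar_dot :: "('g::ab_group_add) poly \<Rightarrow> 'g poly \<Rightarrow> 'g poly" where
  "stuffle_bar_dot = bil (\<lambda>u v. liftZ (zdot (-1) (parse 1 u) (parse 1 v)))"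

text \<open>gamma on words: the algebra automorphism x -> x, y_s -> x + y_s.\<close>
fun gamma :: "'g word \<Rightarrow> 'g poly" where
  "gamma [] = wd []"
| "gamma (X # u) = cons_poly X (gamma u)"
| "gamma (Y s # u) = (\<lambda>v. cons_poly X (gamma u) v + cons_poly (Y s) (gamma u) v)"

definition snoc_poly :: "'g letter \<Rightarrow> 'g poly \<Rightarrow> 'g poly" where
  "snoc_poly a P = (\<lambda>v. if v \<noteq> [] \<and> last v = a then P (butlast v) else 0)"

definition dsh_word :: "'g word \<Rightarrow> 'g poly" where
  "dsh_word u = (if u = [] then wd []
                 else case last u of X \<Rightarrow> (\<lambda>_. 0) | Y s \<Rightarrow> snoc_poly (Y s) (gamma (butlast u)))"

definition dsh :: "'g poly \<Rightarrow> 'g poly" where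
  "dsh = lin dsh_word"

fun Iz_aux :: "('g::ab_group_add) \<Rightarrow> 'g zword \<Rightarrow> 'g zword" where
  "Iz_aux p [] = []"
| "Iz_aux p ((k, s) # w) = (k, p + s) # Iz_aux (p + s) w"

fun Iinvz_aux :: "('g::ab_group_add) \<Rightarrow> 'g zword \<Rightarrow> 'g zword" where
  "Iinvz_aux p [] = []"
| "Iinvz_aux p ((k, s) # w) = (k, s - p) # Iinvz_aux s w"

definition Imap :: "('g::ab_group_add) poly \<Rightarrow> 'g poly" where
  "Imap = lin (\<lambda>u. wd (toW (Iz_aux 0 (parse 1 u))))"

definition Iinv :: "('g::ab_group_add) poly \<Rightarrow> 'g poly" where
  "Iinv = lin (\<lambda>u. wd (toW (Iinvz_aux 0 (parse 1 u))))"

definition dstar :: "('g::ab_group_add) poly \<Rightarrow> 'g poly" where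
  "dstar P = Iinv (dsh (Imap P))"

definition dstar_inv :: "('g::ab_group_add) poly \<Rightarrow> 'g poly" where
  "dstar_inv = inv_into A1 dstar"

end

theory Submission
  imports Defs "HOL-Library.Function_Algebras"
begin

text \<open>
  Write a word of \<open>A\<^sup>1\<close> as a z-word \<open>z\<^sub>a\<^sub>1 \<cdots> z\<^sub>a\<^sub>n\<close> with letters \<open>a\<^sub>i = (k\<^sub>i, s\<^sub>i)\<close> and add letters
  componentwise.  In these coordinates \<open>d\<^sub>\<ast>\<close> becomes the map \<open>contract 1\<close> which sends a z-word to
  the sum of all words obtained from it by merging blocks of consecutive letters: \<open>I\<close> turns the
  group labels into partial products, \<open>d\<^sub>s\<^sub>h\<close> expands \<open>\<gamma>(y\<^sub>s) = x + y\<^sub>s\<close>, which either keeps a letter or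
  adds its weight to the next one, and \<open>I\<^sup>-\<^sup>1\<close> undoes the partial products.  Merging with the sign
  \<open>-1\<close> gives the inverse map, so \<open>d\<^sub>\<ast>\<close> is a bijection of \<open>A\<^sup>1\<close>.

  The map \<open>contract 1\<close> satisfies \<open>contract 1 (z\<^sub>a w) = z\<^sub>a C + a \<oplus> C\<close> with \<open>C = contract 1 w\<close>, where
  \<open>a \<oplus> C\<close> merges \<open>a\<close> into the first letter.  Expanding the stuffle product of two elements of this
  shape yields exactly the recursion of the barred stuffle product with its minus sign, and the
  dotted products only involve the first letters; induction on words gives (i) and (ii), and
  linearity extends them to \<open>A\<^sup>1\<close>.  The primed statements follow by conjugating with \<open>d\<^sub>\<ast>\<close>.
\<close>

section \<open>Finitely supported coefficient functions\<close>

definition supp :: "('a \<Rightarrow> rat) \<Rightarrow> 'a set" where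
  "supp P = {u. P u \<noteq> 0}"

abbreviation finsupp :: "('a \<Rightarrow> rat) \<Rightarrow> bool" where
  "finsupp P \<equiv> finite (supp P)"

definition smul :: "rat \<Rightarrow> ('a \<Rightarrow> rat) \<Rightarrow> 'a \<Rightarrow> rat" where
  "smul c P = (\<lambda>v. c * P v)"

lemma smul_apply [simp]: "smul c P v = c * P v"
  by (simp add: smul_def)

lemma smul_one [simp]: "smul 1 P = P"
  by (rule ext) simp

lemma smul_minus_one [simp]: "smul (-1) P = - P"
  by (rule ext) simp

lemma supp_wd [simp]: "supp (wd u) = {u}"
  by (auto simp: supp_def wd_def)

lemma finsupp_wd [simp]: "finsupp (wd u)"
  by simp

lemma supp_add: "supp (P + Q) \<subseteq> supp P \<union> supp Q"
  by (auto simp: supp_def)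

lemma finsupp_add [simp]: "finsupp P \<Longrightarrow> finsupp Q \<Longrightarrow> finsupp (P + Q)"
  by (meson finite_UnI finite_subset supp_add)

lemma finsupp_uminus [simp]: "finsupp (- P) = finsupp P"
  by (simp add: supp_def)

lemma finsupp_diff [simp]: "finsupp P \<Longrightarrow> finsupp Q \<Longrightarrow> finsupp (P - Q)"
  using finsupp_add[of P "- Q"] by simp

lemma finsupp_smul [simp]: "finsupp P \<Longrightarrow> finsupp (smul c P)"
  by (rule finite_subset[of _ "supp P"]) (auto simp: supp_def)

lemma finsupp_zero [simp]: "finsupp (0 :: 'a \<Rightarrow> rat)"
  by (simp add: supp_def)

lemma lin_eq: "finite S \<Longrightarrow> supp P \<subseteq> S \<Longrightarrow> lin f P v = (\<Sum>u\<in>S. P u * f u v)"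
  unfolding lin_def supp_def[symmetric]
  by (rule sum.mono_neutral_left) (auto simp: supp_def)

lemma lin_wd [simp]: "lin f (wd u) = f u"
  by (rule ext, subst lin_eq[of "{u}"]) (auto simp: wd_def supp_def)

lemma lin_zero [simp]: "lin f 0 = 0"
  by (rule ext) (simp add: lin_def)

lemma lin_add: "finsupp P \<Longrightarrow> finsupp Q \<Longrightarrow> lin f (P + Q) = lin f P + lin f Q"
  by (rule ext) (simp add: lin_eq[of "supp P \<union> supp Q"] supp_add distrib_right sum.distrib)

lemma lin_uminus: "lin f (- P) = - lin f P"
  by (rule ext) (simp add: lin_def sum_negf)

lemma lin_diff: "finsupp P \<Longrightarrow> finsupp Q \<Longrightarrow> lin f (P - Q) = lin f P - lin f Q"
  using lin_add[of P "- Q" f] by (simp add: lin_uminus)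

lemma lin_smul: "finsupp P \<Longrightarrow> lin f (smul c P) = smul c (lin f P)"
proof (rule ext)
  fix v assume P: "finsupp P"
  have "supp (smul c P) \<subseteq> supp P" by (auto simp: supp_def)
  then have "lin f (smul c P) v = (\<Sum>u\<in>supp P. c * P u * f u v)" using P by (simp add: lin_eq)
  also have "\<dots> = smul c (lin f P) v" using P by (simp add: lin_eq sum_distrib_left mult.assoc)
  finally show "lin f (smul c P) v = smul c (lin f P) v" .
qed

lemma lin_fadd: "lin (\<lambda>u. f u + g u) P = lin f P + lin g P"
  by (rule ext) (simp add: lin_def distrib_left sum.distrib)

lemma lin_fdiff: "lin (\<lambda>u. f u - g u) P = lin f P - lin g P"
  by (rule ext) (simp add: lin_def algebra_simps sum_subtractf)

lemma lin_fsmul: "lin (\<lambda>x. smul c (f x)) P = smul c (lin f P)"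
  by (rule ext) (simp add: lin_def sum_distrib_left mult_ac)

lemma lin_cong: "(\<And>u. u \<in> supp P \<Longrightarrow> f u = g u) \<Longrightarrow> lin f P = lin g P"
  unfolding lin_def supp_def by (rule ext, rule sum.cong) auto

lemma lin_wd_id: "finsupp P \<Longrightarrow> lin wd P = P"
proof (rule ext)
  fix v assume "finsupp P"
  then have "lin wd P v = (\<Sum>u\<in>supp P. if u = v then P u else 0)"
    by (simp add: lin_eq wd_def if_distrib cong: if_cong)
  also have "\<dots> = P v" using \<open>finsupp P\<close> by (simp add: supp_def)
  finally show "lin wd P v = P v" .
qed

lemma supp_lin: "supp (lin g P) \<subseteq> (\<Union>u\<in>supp P. supp (g u))"
proof
  fix x assume "x \<in> supp (lin g P)"
  then have "(\<Sum>u\<in>{u. P u \<noteq> 0}. P u * g u x) \<noteq> 0" by (simp add: supp_def lin_def)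
  then obtain u where "P u \<noteq> 0" "P u * g u x \<noteq> 0"
    by (metis (mono_tags, lifting) mem_Collect_eq sum.neutral)
  then show "x \<in> (\<Union>u\<in>supp P. supp (g u))" by (auto simp: supp_def)
qed

lemma finsupp_lin [simp]:
  "finsupp P \<Longrightarrow> (\<And>u. u \<in> supp P \<Longrightarrow> finsupp (g u)) \<Longrightarrow> finsupp (lin g P)"
  by (rule finite_subset[OF supp_lin]) auto

lemma lin_lin:
  assumes "finsupp P" "\<And>u. u \<in> supp P \<Longrightarrow> finsupp (g u)"
  shows "lin f (lin g P) = lin (\<lambda>u. lin f (g u)) P"
proof (rule ext)
  fix v
  let ?T = "\<Union>u\<in>supp P. supp (g u)"
  have T: "finite ?T" using assms by auto
  have "lin f (lin g P) v = (\<Sum>w\<in>?T. (\<Sum>u\<in>supp P. P u * g u w) * f w v)"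
    by (simp add: lin_eq[OF T supp_lin]) (simp add: lin_def supp_def)
  also have "\<dots> = (\<Sum>u\<in>supp P. \<Sum>w\<in>?T. P u * g u w * f w v)"
    by (simp add: sum_distrib_right sum.swap[of _ ?T])
  also have "\<dots> = (\<Sum>u\<in>supp P. P u * lin f (g u) v)"
  proof (rule sum.cong)
    fix u assume "u \<in> supp P"
    then have "lin f (g u) v = (\<Sum>w\<in>?T. g u w * f w v)" using T by (intro lin_eq) auto
    then show "(\<Sum>w\<in>?T. P u * g u w * f w v) = P u * lin f (g u) v"
      by (simp add: sum_distrib_left mult.assoc)
  qed simp
  also have "\<dots> = lin (\<lambda>u. lin f (g u)) P v" by (simp add: lin_def supp_def)
  finally show "lin f (lin g P) v = lin (\<lambda>u. lin f (g u)) P v" .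
qed

lemma lin_swap: "lin (\<lambda>x. lin (g x) Q) P = lin (\<lambda>y. lin (\<lambda>x. g x y) P) Q"
proof (rule ext)
  fix v
  have "lin (\<lambda>x. lin (g x) Q) P v = (\<Sum>x\<in>supp P. \<Sum>y\<in>supp Q. P x * Q y * g x y v)"
    by (simp add: lin_def supp_def sum_distrib_left mult.assoc)
  also have "\<dots> = (\<Sum>y\<in>supp Q. \<Sum>x\<in>supp P. P x * Q y * g x y v)" by (rule sum.swap)
  also have "\<dots> = lin (\<lambda>y. lin (\<lambda>x. g x y) P) Q v"
    by (simp add: lin_def supp_def sum_distrib_left mult_ac)
  finally show "lin (\<lambda>x. lin (g x) Q) P v = lin (\<lambda>y. lin (\<lambda>x. g x y) P) Q v" .
qed

lemma bil_lin: "bil f P Q = lin (\<lambda>u. lin (f u) Q) P"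
  by (rule ext) (simp add: bil_def lin_def sum_distrib_left mult.assoc)

lemma bil_wd: "bil f (wd x) (wd y) = f x y"
  by (simp add: bil_lin)

lemma finsupp_bil [simp]: "finsupp A \<Longrightarrow> finsupp B \<Longrightarrow> (\<And>x y. finsupp (f x y)) \<Longrightarrow> finsupp (bil f A B)"
  by (simp add: bil_lin)

lemma bil_add1 [simp]: "finsupp A \<Longrightarrow> finsupp A' \<Longrightarrow> bil f (A + A') B = bil f A B + bil f A' B"
  by (simp add: bil_lin lin_add)

lemma bil_add2 [simp]: "finsupp B \<Longrightarrow> finsupp B' \<Longrightarrow> bil f A (B + B') = bil f A B + bil f A B'"
  by (simp add: bil_lin lin_add lin_fadd)

text \<open>Identities between maps that are linear on finitely supported arguments (\<open>lin_map\<close>) and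
  preserve finite support (\<open>fin_map\<close>) need only be checked on words; the side conditions are
  discharged by the rule sets \<open>lin_map_intros\<close> and \<open>fin_map_intros\<close>.\<close>

named_theorems lin_map_intros and fin_map_intros

definition lin_map :: "(('a \<Rightarrow> rat) \<Rightarrow> ('b \<Rightarrow> rat)) \<Rightarrow> bool" where
  "lin_map F \<longleftrightarrow> (\<forall>P. finsupp P \<longrightarrow> F P = lin (\<lambda>x. F (wd x)) P)"

definition fin_map :: "(('a \<Rightarrow> rat) \<Rightarrow> ('b \<Rightarrow> rat)) \<Rightarrow> bool" where
  "fin_map F \<longleftrightarrow> (\<forall>P. finsupp P \<longrightarrow> finsupp (F P))"

lemma lin_mapD: "lin_map F \<Longrightarrow> finsupp P \<Longrightarrow> F P = lin (\<lambda>x. F (wd x)) P"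
  unfolding lin_map_def by blast

lemma lin_map_eq:
  assumes "lin_map F" "lin_map G" "\<And>x. F (wd x) = G (wd x)" "finsupp P"
  shows "F P = G P"
  using lin_mapD[OF assms(1,4)] lin_mapD[OF assms(2,4)] assms(3) by simp

lemma bil_map_eq:
  assumes "\<And>B. finsupp B \<Longrightarrow> lin_map (\<lambda>A. F A B)" "\<And>A. finsupp A \<Longrightarrow> lin_map (F A)"
    and "\<And>B. finsupp B \<Longrightarrow> lin_map (\<lambda>A. G A B)" "\<And>A. finsupp A \<Longrightarrow> lin_map (G A)"
    and "\<And>x y. F (wd x) (wd y) = G (wd x) (wd y)" "finsupp A" "finsupp B"
  shows "F A B = G A B"
proof -
  have "F (wd x) B = G (wd x) B" for x
    by (rule lin_map_eq[OF assms(2)[OF finsupp_wd] assms(4)[OF finsupp_wd] assms(5) assms(7)])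
  then show ?thesis
    by (rule lin_map_eq[OF assms(1)[OF assms(7)] assms(3)[OF assms(7)] _ assms(6)])
qed

lemma lin_map_lin [intro]: "lin_map (lin g)"
  by (simp add: lin_map_def)

lemma lin_map_id [intro, lin_map_intros]: "lin_map (\<lambda>P. P)"
  by (simp add: lin_map_def lin_wd_id)

lemma lin_map_apply_lin:
  assumes "lin_map F" "finsupp P" "\<And>u. u \<in> supp P \<Longrightarrow> finsupp (h u)"
  shows "F (lin h P) = lin (\<lambda>u. F (h u)) P"
proof -
  have "F (lin h P) = lin (\<lambda>x. F (wd x)) (lin h P)" by (rule lin_mapD) (use assms in auto)
  also have "\<dots> = lin (\<lambda>u. lin (\<lambda>x. F (wd x)) (h u)) P" using assms by (simp add: lin_lin)
  also have "\<dots> = lin (\<lambda>u. F (h u)) P" by (rule lin_cong, rule lin_mapD[symmetric]) (use assms in auto)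
  finally show ?thesis .
qed

lemma lin_map_comp:
  fixes F :: "('b \<Rightarrow> rat) \<Rightarrow> ('c \<Rightarrow> rat)" and G :: "('a \<Rightarrow> rat) \<Rightarrow> ('b \<Rightarrow> rat)"
  assumes "lin_map F" "lin_map G" "fin_map G"
  shows "lin_map (\<lambda>P. F (G P))"
  unfolding lin_map_def
proof (intro allI impI)
  fix P :: "'a \<Rightarrow> rat" assume P: "finsupp P"
  have "F (G P) = F (lin (\<lambda>x. G (wd x)) P)" using lin_mapD[OF assms(2) P] by simp
  also have "\<dots> = lin (\<lambda>x. F (G (wd x))) P"
    using assms P by (intro lin_map_apply_lin) (auto simp: fin_map_def)
  finally show "F (G P) = lin (\<lambda>x. F (G (wd x))) P" .
qed

lemma lin_map_add [intro, lin_map_intros]: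
  fixes F :: "('a \<Rightarrow> rat) \<Rightarrow> ('b \<Rightarrow> rat)"
  assumes "lin_map F" "lin_map G"
  shows "lin_map (\<lambda>P. F P + G P)"
  unfolding lin_map_def
proof (intro allI impI)
  fix P :: "'a \<Rightarrow> rat" assume P: "finsupp P"
  show "F P + G P = lin (\<lambda>x. F (wd x) + G (wd x)) P"
    by (simp only: lin_fadd lin_mapD[OF assms(1) P, symmetric] lin_mapD[OF assms(2) P, symmetric])
qed

lemma lin_map_diff [intro, lin_map_intros]:
  fixes F :: "('a \<Rightarrow> rat) \<Rightarrow> ('b \<Rightarrow> rat)"
  assumes "lin_map F" "lin_map G"
  shows "lin_map (\<lambda>P. F P - G P)"
  unfolding lin_map_def
proof (intro allI impI)
  fix P :: "'a \<Rightarrow> rat" assume P: "finsupp P"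
  show "F P - G P = lin (\<lambda>x. F (wd x) - G (wd x)) P"
    by (simp only: lin_fdiff lin_mapD[OF assms(1) P, symmetric] lin_mapD[OF assms(2) P, symmetric])
qed

lemma lin_map_lin_param:
  assumes "\<And>x. lin_map (H x)"
  shows "lin_map (\<lambda>B. lin (\<lambda>x. H x B) P)"
  unfolding lin_map_def
proof (intro allI impI)
  fix B :: "'b \<Rightarrow> rat" assume B: "finsupp B"
  have "lin (\<lambda>x. H x B) P = lin (\<lambda>x. lin (\<lambda>y. H x (wd y)) B) P"
    by (rule lin_cong, rule lin_mapD) (use assms B in auto)
  also have "\<dots> = lin (\<lambda>y. lin (\<lambda>x. H x (wd y)) P) B" by (rule lin_swap)
  finally show "lin (\<lambda>x. H x B) P = lin (\<lambda>y. lin (\<lambda>x. H x (wd y)) P) B" .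
qed

lemma lin_map_smul0: "lin_map (smul c)"
  by (simp add: lin_map_def lin_fsmul lin_wd_id)

lemma lin_map_bil1: "lin_map (\<lambda>A. bil f A B)"
  by (simp add: bil_lin lin_map_lin)

lemma lin_map_bil2: "lin_map (bil f A)"
  unfolding bil_lin by (rule lin_map_lin_param) (rule lin_map_lin)

lemma lin_map_linF [intro, lin_map_intros]: "lin_map F \<Longrightarrow> fin_map F \<Longrightarrow> lin_map (\<lambda>P. lin g (F P))"
  using lin_map_comp[OF lin_map_lin] .

lemma lin_map_smul [intro, lin_map_intros]: "lin_map F \<Longrightarrow> fin_map F \<Longrightarrow> lin_map (\<lambda>P. smul c (F P))"
  using lin_map_comp[OF lin_map_smul0] .

lemma lin_map_bilF1 [intro, lin_map_intros]: "lin_map F \<Longrightarrow> fin_map F \<Longrightarrow> lin_map (\<lambda>P. bil f (F P) B)"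
  using lin_map_comp[OF lin_map_bil1] .

lemma lin_map_bilF2 [intro, lin_map_intros]: "lin_map F \<Longrightarrow> fin_map F \<Longrightarrow> lin_map (\<lambda>P. bil f A (F P))"
  using lin_map_comp[OF lin_map_bil2] .

lemma fin_map_id [intro, fin_map_intros]: "fin_map (\<lambda>P. P)"
  by (simp add: fin_map_def)

lemma fin_map_add [intro, fin_map_intros]: "fin_map F \<Longrightarrow> fin_map G \<Longrightarrow> fin_map (\<lambda>P. F P + G P)"
  by (simp add: fin_map_def)

lemma fin_map_diff [intro, fin_map_intros]: "fin_map F \<Longrightarrow> fin_map G \<Longrightarrow> fin_map (\<lambda>P. F P - G P)"
  by (simp add: fin_map_def)

lemma fin_map_smul [intro, fin_map_intros]: "fin_map F \<Longrightarrow> fin_map (\<lambda>P. smul c (F P))"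
  by (simp add: fin_map_def)

lemma fin_map_linF [intro, fin_map_intros]: "fin_map F \<Longrightarrow> (\<And>x. finsupp (g x)) \<Longrightarrow> fin_map (\<lambda>P. lin g (F P))"
  by (simp add: fin_map_def)

lemma fin_map_bilF1 [intro, fin_map_intros]:
  "fin_map F \<Longrightarrow> finsupp B \<Longrightarrow> (\<And>x y. finsupp (f x y)) \<Longrightarrow> fin_map (\<lambda>P. bil f (F P) B)"
  by (simp add: fin_map_def)

lemma fin_map_bilF2 [intro, fin_map_intros]:
  "fin_map F \<Longrightarrow> finsupp A \<Longrightarrow> (\<And>x y. finsupp (f x y)) \<Longrightarrow> fin_map (\<lambda>P. bil f A (F P))"
  by (simp add: fin_map_def)

definition zadd :: "nat \<times> 'g::ab_group_add \<Rightarrow> nat \<times> 'g \<Rightarrow> nat \<times> 'g" where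
  "zadd a b = (fst a + fst b, snd a + snd b)"

lemma zadd_assoc: "zadd (zadd a b) c = zadd a (zadd b c)"
  by (simp add: zadd_def ac_simps)

lemma zadd_commute: "zadd a b = zadd b a"
  by (simp add: zadd_def ac_simps)

lemma zadd_left_commute: "zadd a (zadd b c) = zadd b (zadd a c)"
  by (simp add: zadd_def ac_simps)

lemmas zadd_ac = zadd_assoc zadd_commute zadd_left_commute

fun merge_word :: "nat \<times> 'g::ab_group_add \<Rightarrow> (nat \<times> 'g) list \<Rightarrow> (nat \<times> 'g) list \<Rightarrow> rat" where
  "merge_word a [] = 0"
| "merge_word a (b # x) = wd (zadd a b # x)"

definition merge :: "nat \<times> 'g::ab_group_add \<Rightarrow> ((nat \<times> 'g) list \<Rightarrow> rat) \<Rightarrow> (nat \<times> 'g) list \<Rightarrow> rat" where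
  "merge a = lin (merge_word a)"

lemma cons_poly_lin: "finsupp P \<Longrightarrow> cons_poly a P = lin (\<lambda>x. wd (a # x)) P"
proof (rule ext)
  fix v assume P: "finsupp P"
  have "lin (\<lambda>x. wd (a # x)) P v = (\<Sum>u\<in>supp P. P u * wd (a # u) v)" using P by (simp add: lin_eq)
  also have "\<dots> = cons_poly a P v"
  proof (cases v)
    case Nil then show ?thesis by (simp add: wd_def cons_poly_def)
  next
    case (Cons b v')
    show ?thesis
    proof (cases "b = a \<and> v' \<in> supp P")
      case True
      then show ?thesis using Cons P
        by (auto simp: wd_def cons_poly_def if_distrib cong: if_cong)
    next
      case False
      then show ?thesis using Cons
        by (auto simp: wd_def cons_poly_def supp_def intro!: sum.neutral)
    qed
  qed
  finally show "cons_poly a P v = lin (\<lambda>x. wd (a # x)) P v" ..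
qed

lemma cons_poly_wd [simp]: "cons_poly a (wd x) = wd (a # x)"
  by (simp add: cons_poly_lin)

lemma finsupp_cons_poly [simp]: "finsupp P \<Longrightarrow> finsupp (cons_poly a P)"
  by (simp add: cons_poly_lin)

lemma cons_poly_add [simp]: "cons_poly a (P + Q) = cons_poly a P + cons_poly a Q"
  by (rule ext) (simp add: cons_poly_def split: list.split)

lemma finsupp_merge_word [simp]: "finsupp (merge_word a x)"
  by (cases x) (auto simp del: supp_wd simp: supp_def[symmetric])

lemma finsupp_merge [simp]: "finsupp P \<Longrightarrow> finsupp (merge a P)"
  by (simp add: merge_def)

lemma merge_wd_Nil [simp]: "merge a (wd []) = 0"
  by (simp add: merge_def fun_eq_iff)

lemma merge_wd_Cons [simp]: "merge a (wd (b # x)) = wd (zadd a b # x)"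
  by (simp add: merge_def)

lemma merge_zero [simp]: "merge a 0 = 0"
  by (simp add: merge_def)

lemma merge_add [simp]: "finsupp P \<Longrightarrow> finsupp Q \<Longrightarrow> merge a (P + Q) = merge a P + merge a Q"
  by (simp add: merge_def lin_add)

lemma merge_smul [simp]: "finsupp P \<Longrightarrow> merge a (smul c P) = smul c (merge a P)"
  by (simp add: merge_def lin_smul)

lemma lin_map_cons_poly0 [intro]: "lin_map (cons_poly a)"
  by (simp add: lin_map_def cons_poly_lin)

lemma fin_map_cons_poly0 [intro]: "fin_map (cons_poly a)"
  by (simp add: fin_map_def)

lemma lin_map_merge0 [intro]: "lin_map (merge a)"
  by (simp add: merge_def lin_map_lin)

lemma fin_map_merge0 [intro]: "fin_map (merge a)"
  by (simp add: fin_map_def)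

lemma lin_map_cons_poly [intro, lin_map_intros]:
  "lin_map F \<Longrightarrow> fin_map F \<Longrightarrow> lin_map (\<lambda>P. cons_poly a (F P))"
  using lin_map_comp[OF lin_map_cons_poly0] .

lemma fin_map_cons_poly [intro, fin_map_intros]: "fin_map F \<Longrightarrow> fin_map (\<lambda>P. cons_poly a (F P))"
  by (simp add: fin_map_def)

lemma lin_map_merge [intro, lin_map_intros]: "lin_map F \<Longrightarrow> fin_map F \<Longrightarrow> lin_map (\<lambda>P. merge a (F P))"
  unfolding merge_def by (rule lin_map_linF)

lemma fin_map_merge [intro, fin_map_intros]: "fin_map F \<Longrightarrow> fin_map (\<lambda>P. merge a (F P))"
  by (simp add: fin_map_def)

lemma merge_cons_poly: "finsupp P \<Longrightarrow> merge a (cons_poly b P) = cons_poly (zadd a b) P"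
  by (rule lin_map_eq[where F="\<lambda>P. merge a (cons_poly b P)" and G="cons_poly (zadd a b)"]) auto

lemma merge_merge: "finsupp P \<Longrightarrow> merge a (merge b P) = merge (zadd a b) P"
proof (rule lin_map_eq[where F="\<lambda>P. merge a (merge b P)" and G="merge (zadd a b)"])
  fix x show "merge a (merge b (wd x)) = merge (zadd a b) (wd x)"
    by (cases x) (auto simp: zadd_assoc)
qed auto

abbreviation "zst \<equiv> bil (zprod 1)"
abbreviation "zst_bar \<equiv> bil (zprod (-1))"
abbreviation "zst_dot \<equiv> bil (zdot 1)"
abbreviation "zst_bar_dot \<equiv> bil (zdot (-1))"

lemma zprod_Cons_Cons:
  "zprod c (a # w) (b # v) = cons_poly a (zprod c w (b # v)) + cons_poly b (zprod c (a # w) v)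
     + smul c (cons_poly (zadd a b) (zprod c w v))"
  by (cases a; cases b) (simp add: zadd_def plus_fun_def smul_def)

declare zprod.simps(3) [simp del]

lemma bil_zprod_wd [simp]: "bil (zprod c) (wd x) (wd y) = zprod c x y"
  by (rule bil_wd)

lemma bil_zdot_wd [simp]: "bil (zdot c) (wd x) (wd y) = zdot c x y"
  by (rule bil_wd)

lemma zprod_Nil2 [simp]: "zprod c w [] = wd w"
  by (cases w) auto

lemma zprod_Nil_fun [simp]: "zprod c [] = wd"
  by (rule ext) simp

lemma finsupp_zprod [simp]: "finsupp (zprod c w v)"
  by (induction c w v rule: zprod.induct) (simp, simp, subst zprod_Cons_Cons, simp)

lemma zdot_Cons_Cons: "zdot c (a # w) (b # v) = cons_poly (zadd a b) (zprod c w v)"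
  by (cases a; cases b) (simp add: zadd_def)

lemma zdot_Nil2 [simp]: "zdot c w [] = wd w"
  by (cases w) auto

lemma zdot_Nil_fun [simp]: "zdot c [] = wd"
  by (rule ext) simp

lemma finsupp_zdot [simp]: "finsupp (zdot c w v)"
  by (cases w; cases v) (auto simp: zdot_Cons_Cons simp del: zdot.simps)

section \<open>Contraction of consecutive letters\<close>

fun contract_word :: "rat \<Rightarrow> (nat \<times> 'g::ab_group_add) list \<Rightarrow> (nat \<times> 'g) list \<Rightarrow> rat" where
  "contract_word c [] = wd []"
| "contract_word c (a # u) = cons_poly a (contract_word c u) + smul c (merge a (contract_word c u))"

lemma contract_word_Cons [simp]:
  "contract_word c (a # u) = cons_poly a (contract_word c u) + smul c (merge a (contract_word c u))"
  by (rule ext) simp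

declare contract_word.simps(2) [simp del]

lemma finsupp_contract_word [simp]: "finsupp (contract_word c w)"
  by (induction w) (simp_all only: contract_word.simps finsupp_add finsupp_smul
      finsupp_cons_poly finsupp_merge finsupp_wd)

definition contract :: "rat \<Rightarrow> ((nat \<times> 'g::ab_group_add) list \<Rightarrow> rat) \<Rightarrow> (nat \<times> 'g) list \<Rightarrow> rat" where
  "contract c = lin (contract_word c)"

lemma contract_wd [simp]: "contract c (wd x) = contract_word c x"
  by (simp add: contract_def)

lemma contract_zero [simp]: "contract c 0 = 0"
  by (simp add: contract_def)

lemma finsupp_contract [simp]: "finsupp P \<Longrightarrow> finsupp (contract c P)"
  by (simp add: contract_def)

lemma contract_add [simp]: "finsupp P \<Longrightarrow> finsupp Q \<Longrightarrow> contract c (P + Q) = contract c P + contract c Q"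
  by (simp add: contract_def lin_add)

lemma contract_diff [simp]: "finsupp P \<Longrightarrow> finsupp Q \<Longrightarrow> contract c (P - Q) = contract c P - contract c Q"
  by (simp add: contract_def lin_diff)

lemma contract_smul [simp]: "finsupp P \<Longrightarrow> contract c (smul d P) = smul d (contract c P)"
  by (simp add: contract_def lin_smul)

lemma lin_map_contract [intro, lin_map_intros]: "lin_map F \<Longrightarrow> fin_map F \<Longrightarrow> lin_map (\<lambda>P. contract c (F P))"
  unfolding contract_def by (rule lin_map_linF)

lemma fin_map_contract [intro, fin_map_intros]: "fin_map F \<Longrightarrow> fin_map (\<lambda>P. contract c (F P))"
  by (simp add: fin_map_def)

lemma contract_cons_poly:
  "finsupp P \<Longrightarrow> contract c (cons_poly a P) = cons_poly a (contract c P) + smul c (merge a (contract c P))"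
  by (rule lin_map_eq[where F="\<lambda>P. contract c (cons_poly a P)"
        and G="\<lambda>P. cons_poly a (contract c P) + smul c (merge a (contract c P))"])
    (intro lin_map_intros fin_map_intros | simp)+

lemma contract_merge: "finsupp P \<Longrightarrow> contract c (merge a P) = merge a (contract c P)"
proof (rule lin_map_eq[where F="\<lambda>P. contract c (merge a P)" and G="\<lambda>P. merge a (contract c P)"])
  show "contract c (merge a (wd x)) = merge a (contract c (wd x))" for x
    by (cases x) (auto simp: merge_cons_poly merge_merge)
qed (intro lin_map_intros fin_map_intros | simp)+

lemma contract_contract_word_neg: "contract c (contract_word (-c) w) = wd w"
proof (induction w)
  case (Cons a u)
  have "contract c (contract_word (-c) (a # u))
      = cons_poly a (wd u) + smul c (merge a (wd u)) + smul (-c) (merge a (wd u))"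
    by (simp add: contract_cons_poly contract_merge Cons)
  also have "\<dots> = wd (a # u)" by (rule ext) (simp add: algebra_simps)
  finally show ?case .
qed simp

lemma contract_inverse: "finsupp P \<Longrightarrow> contract c (contract (-c) P) = P"
proof -
  assume P: "finsupp P"
  have "contract c (contract (-c) P) = lin (\<lambda>u. contract c (contract_word (-c) u)) P"
    unfolding contract_def[of "-c"] by (rule lin_map_apply_lin) (simp_all add: P contract_def lin_map_lin)
  then show ?thesis by (simp add: contract_contract_word_neg lin_wd_id P)
qed

section \<open>Contraction intertwines the products\<close>

text \<open>\<open>contract_word 1 (a # u) = cons_merge a (contract_word 1 u)\<close>.\<close>

abbreviation cons_merge ::
  "nat \<times> 'g::ab_group_add \<Rightarrow> ((nat \<times> 'g) list \<Rightarrow> rat) \<Rightarrow> (nat \<times> 'g) list \<Rightarrow> rat" where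
  "cons_merge a P \<equiv> cons_poly a P + merge a P"

lemma zst_cons_merge_wd:
  "zst (cons_merge a (wd x)) (cons_merge b (wd y)) =
     cons_merge a (zst (wd x) (cons_merge b (wd y))) + cons_merge b (zst (cons_merge a (wd x)) (wd y))
     - cons_merge (zadd a b) (zst (wd x) (wd y))"
  by (cases x; cases y) (simp_all add: zprod_Cons_Cons merge_cons_poly zadd_ac algebra_simps)

lemma zst_cons_merge:
  assumes "finsupp P" "finsupp Q"
  shows "zst (cons_merge a P) (cons_merge b Q) =
     cons_merge a (zst P (cons_merge b Q)) + cons_merge b (zst (cons_merge a P) Q)
     - cons_merge (zadd a b) (zst P Q)"
  by (rule bil_map_eq[where F = "\<lambda>P Q. zst (cons_merge a P) (cons_merge b Q)"
        and G = "\<lambda>P Q. cons_merge a (zst P (cons_merge b Q)) + cons_merge b (zst (cons_merge a P) Q)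
          - cons_merge (zadd a b) (zst P Q)"])
    (rule zst_cons_merge_wd | intro lin_map_intros fin_map_intros | simp add: assms)+

lemma contract_zst_bar_words:
  "contract 1 (zprod (-1) w v) = zst (contract_word 1 w) (contract_word 1 v)"
proof (induction "-1::rat" w v rule: zprod.induct)
  case (1 v)
  then show ?case by (simp add: bil_lin lin_wd_id)
next
  case (2 k s w)
  then show ?case by (simp add: bil_lin lin_wd_id del: contract_word_Cons)
next
  case (3 k s w l t v)
  let ?a = "(k, s)" and ?b = "(l, t)"
  have "contract 1 (zprod (-1) (?a # w) (?b # v)) =
      contract 1 (cons_poly ?a (zprod (-1) w (?b # v)))
      + contract 1 (cons_poly ?b (zprod (-1) (?a # w) v))
      - contract 1 (cons_poly (zadd ?a ?b) (zprod (-1) w v))"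
    by (simp only: zprod_Cons_Cons smul_minus_one) (simp add: diff_conv_add_uminus[symmetric])
  also have "\<dots> = zst (contract_word 1 (?a # w)) (contract_word 1 (?b # v))"
    using 3 by (simp only: contract_cons_poly finsupp_zprod smul_one contract_word_Cons
        zst_cons_merge finsupp_contract_word)
  finally show ?case .
qed

lemma contract_zst_bar:
  assumes "finsupp P" "finsupp Q"
  shows "contract 1 (zst_bar P Q) = zst (contract 1 P) (contract 1 Q)"
  by (rule bil_map_eq[where F = "\<lambda>P Q. contract 1 (zst_bar P Q)"
        and G = "\<lambda>P Q. zst (contract 1 P) (contract 1 Q)"])
    (intro lin_map_intros fin_map_intros | simp add: assms contract_zst_bar_words)+

lemma zst_dot_cons_merge_wd:
  "zst_dot (cons_merge a (wd x)) (cons_merge b (wd y)) = cons_merge (zadd a b) (zst (wd x) (wd y))"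
  by (cases x; cases y)
    (simp_all add: zprod_Cons_Cons zdot_Cons_Cons merge_cons_poly zadd_ac algebra_simps)

lemma zst_dot_cons_merge:
  assumes "finsupp P" "finsupp Q"
  shows "zst_dot (cons_merge a P) (cons_merge b Q) = cons_merge (zadd a b) (zst P Q)"
  by (rule bil_map_eq[where F = "\<lambda>P Q. zst_dot (cons_merge a P) (cons_merge b Q)"
        and G = "\<lambda>P Q. cons_merge (zadd a b) (zst P Q)"])
    (rule zst_dot_cons_merge_wd | intro lin_map_intros fin_map_intros | simp add: assms)+

lemma contract_zst_bar_dot_words:
  "contract 1 (zdot (-1) w v) = zst_dot (contract_word 1 w) (contract_word 1 v)"
proof (cases w)
  case Nil then show ?thesis by (simp add: bil_lin lin_wd_id)
next
  case (Cons a w')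
  show ?thesis
  proof (cases v)
    case Nil then show ?thesis using Cons by (simp add: bil_lin lin_wd_id del: contract_word_Cons)
  next
    case (Cons b v')
    show ?thesis using \<open>w = a # w'\<close> Cons
      by (simp only: zdot_Cons_Cons contract_cons_poly finsupp_zprod smul_one contract_word_Cons
          zst_dot_cons_merge finsupp_contract_word contract_zst_bar_words)
  qed
qed

lemma contract_zst_bar_dot:
  assumes "finsupp P" "finsupp Q"
  shows "contract 1 (zst_bar_dot P Q) = zst_dot (contract 1 P) (contract 1 Q)"
  by (rule bil_map_eq[where F = "\<lambda>P Q. contract 1 (zst_bar_dot P Q)"
        and G = "\<lambda>P Q. zst_dot (contract 1 P) (contract 1 Q)"])
    (intro lin_map_intros fin_map_intros | simp add: assms contract_zst_bar_dot_words)+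

section \<open>Coordinates: z-words and words of \<open>A\<^sup>1\<close>\<close>

definition valid_zword :: "(nat \<times> 'g) list \<Rightarrow> bool" where
  "valid_zword z \<longleftrightarrow> (\<forall>p\<in>set z. 1 \<le> fst p)"

definition ends_Y :: "'g letter list \<Rightarrow> bool" where
  "ends_Y u \<longleftrightarrow> u = [] \<or> (\<exists>s. last u = Y s)"

lemma valid_zword_simps [simp]:
  "valid_zword []" "valid_zword ((k, s) # z) \<longleftrightarrow> 1 \<le> k \<and> valid_zword z"
  by (auto simp: valid_zword_def)

lemma toW_simps [simp]: "toW [] = []" "toW ((k, s) # z) = replicate (k - 1) X @ Y s # toW z"
  by (auto simp: toW_def)

lemma parse_replicate_X: "parse k (replicate m X @ u) = parse (k + m) u"
  by (induction m arbitrary: k) auto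

lemma parse_toW: "valid_zword z \<Longrightarrow> parse 1 (toW z) = z"
  by (induction z) (auto simp: parse_replicate_X)

lemma parse_Suc_0_toW [simp]: "valid_zword z \<Longrightarrow> parse (Suc 0) (toW z) = z"
  using parse_toW by simp

lemma toW_parse_aux:
  assumes "1 \<le> k" and "(u = [] \<and> k = 1) \<or> (u \<noteq> [] \<and> (\<exists>s. last u = Y s))"
  shows "toW (parse k u) = replicate (k - 1) X @ u"
  using assms
proof (induction u arbitrary: k)
  case (Cons a u)
  show ?case
  proof (cases a)
    case X
    then have "u \<noteq> [] \<and> (\<exists>s. last u = Y s)" using Cons.prems by (auto split: if_splits)
    then have "toW (parse (Suc k) u) = replicate k X @ u" using Cons.IH[of "Suc k"] by simp
    moreover have "replicate k X @ u = replicate (k - 1) X @ X # u"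
      using Cons.prems by (cases k) (auto simp: replicate_app_Cons_same)
    ultimately show ?thesis using X by simp
  next
    case (Y s)
    have "toW (parse 1 u) = u"
      using Cons.prems Y Cons.IH[of 1] by (cases "u = []") auto
    then show ?thesis using Y by simp
  qed
qed simp

lemma toW_parse: "ends_Y u \<Longrightarrow> toW (parse 1 u) = u"
  using toW_parse_aux[of 1 u] by (auto simp: ends_Y_def)

lemma valid_zword_parse_aux: "1 \<le> k \<Longrightarrow> valid_zword (parse k u)"
  by (induction k u rule: parse.induct) auto

lemma valid_zword_parse: "valid_zword (parse 1 u)"
  by (simp add: valid_zword_parse_aux)

lemma ends_Y_toW: "valid_zword z \<Longrightarrow> ends_Y (toW z)"
proof (induction z)
  case (Cons a z) then show ?case by (cases a) (auto simp: ends_Y_def)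
qed (simp add: ends_Y_def)

lemma toW_not_Nil: "v \<noteq> [] \<Longrightarrow> toW v \<noteq> []"
  by (cases v) auto

lemma last_toW: "valid_zword v \<Longrightarrow> v \<noteq> [] \<Longrightarrow> \<exists>t. last (toW v) = Y t"
  using ends_Y_toW[of v] toW_not_Nil[of v] by (auto simp: ends_Y_def)

lemma liftZ_ends_Y: "liftZ R = (\<lambda>u. if ends_Y u then R (parse 1 u) else 0)"
  by (simp add: liftZ_def ends_Y_def)

lemma liftZ_lin: "liftZ (lin f R) = lin (\<lambda>z. liftZ (f z)) R"
  by (rule ext) (simp add: liftZ_ends_Y lin_def)

lemma liftZ_add: "liftZ (P + Q) = liftZ P + liftZ Q"
  by (rule ext) (simp add: liftZ_ends_Y)

lemma liftZ_wd: "valid_zword z \<Longrightarrow> liftZ (wd z) = wd (toW z)"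
proof (rule ext)
  fix u assume z: "valid_zword z"
  show "liftZ (wd z) u = wd (toW z) u"
  proof (cases "ends_Y u")
    case True
    have "(parse 1 u = z) = (u = toW z)"
      using True z toW_parse parse_toW by fastforce
    then show ?thesis using True by (simp add: liftZ_ends_Y wd_def)
  next
    case False
    then have "u \<noteq> toW z" using ends_Y_toW[OF z] by auto
    then show ?thesis using False by (simp add: liftZ_ends_Y wd_def)
  qed
qed

text \<open>\<open>liftZ\<close> silently drops coefficients of invalid z-words (those with an index \<open>0\<close>), so every
  identity transported through it needs the support of its argument to be valid.\<close>

definition valid_supp :: "((nat \<times> 'g) list \<Rightarrow> rat) \<Rightarrow> bool" where
  "valid_supp R \<longleftrightarrow> (\<forall>z\<in>supp R. valid_zword z)"

lemma liftZ_eq_lin: "finsupp R \<Longrightarrow> valid_supp R \<Longrightarrow> liftZ R = lin (\<lambda>z. wd (toW z)) R"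
proof -
  assume R: "finsupp R" "valid_supp R"
  have "liftZ R = liftZ (lin wd R)" using R by (simp add: lin_wd_id)
  also have "\<dots> = lin (\<lambda>z. liftZ (wd z)) R" by (rule liftZ_lin)
  also have "\<dots> = lin (\<lambda>z. wd (toW z)) R"
    using R by (intro lin_cong) (simp add: valid_supp_def liftZ_wd)
  finally show ?thesis .
qed

definition zcoeff :: "('g letter list \<Rightarrow> rat) \<Rightarrow> (nat \<times> 'g) list \<Rightarrow> rat" where
  "zcoeff P = (\<lambda>z. if valid_zword z then P (toW z) else 0)"

lemma finsupp_zcoeff: "P \<in> A1 \<Longrightarrow> finsupp (zcoeff P)"
proof -
  assume "P \<in> A1"
  then have "finite {u. P u \<noteq> 0}" by (simp add: A1_def)
  moreover have "supp (zcoeff P) \<subseteq> parse 1 ` {u. P u \<noteq> 0}"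
  proof
    fix z assume "z \<in> supp (zcoeff P)"
    then have "valid_zword z" "P (toW z) \<noteq> 0" by (auto simp: supp_def zcoeff_def split: if_splits)
    then show "z \<in> parse 1 ` {u. P u \<noteq> 0}" using parse_toW[of z] by force
  qed
  ultimately show ?thesis by (meson finite_imageI finite_subset)
qed

lemma valid_supp_zcoeff: "valid_supp (zcoeff P)"
  by (auto simp: valid_supp_def supp_def zcoeff_def split: if_splits)

lemma A1_ends_Y: "P \<in> A1 \<Longrightarrow> P u \<noteq> 0 \<Longrightarrow> ends_Y u"
  by (auto simp: A1_def ends_Y_def)

lemma liftZ_zcoeff: "P \<in> A1 \<Longrightarrow> liftZ (zcoeff P) = P"
proof (rule ext)
  fix u assume P: "P \<in> A1"
  show "liftZ (zcoeff P) u = P u"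
  proof (cases "ends_Y u")
    case True
    then show ?thesis
      using valid_zword_parse[of u] toW_parse[OF True] by (simp add: liftZ_ends_Y zcoeff_def)
  next
    case False
    then show ?thesis using A1_ends_Y[OF P, of u] by (auto simp: liftZ_ends_Y)
  qed
qed

lemma zcoeff_liftZ: "valid_supp R \<Longrightarrow> zcoeff (liftZ R) = R"
  by (rule ext) (auto simp: zcoeff_def liftZ_ends_Y ends_Y_toW parse_toW valid_supp_def supp_def)

lemma liftZ_A1: "finsupp R \<Longrightarrow> liftZ R \<in> A1"
proof -
  assume R: "finsupp R"
  have "{u. liftZ R u \<noteq> 0} \<subseteq> toW ` supp R"
  proof
    fix u assume "u \<in> {u. liftZ R u \<noteq> 0}"
    then have "ends_Y u" "R (parse 1 u) \<noteq> 0" by (auto simp: liftZ_ends_Y split: if_splits)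
    then show "u \<in> toW ` supp R" using toW_parse[of u] by (force simp: supp_def)
  qed
  then have "finite {u. liftZ R u \<noteq> 0}" using R by (meson finite_imageI finite_subset)
  moreover have "\<forall>u. liftZ R u \<noteq> 0 \<longrightarrow> u = [] \<or> (\<exists>s. last u = Y s)"
    by (auto simp: liftZ_def)
  ultimately show ?thesis by (simp add: A1_def)
qed

lemma lin_A1_zcoeff: "P \<in> A1 \<Longrightarrow> lin F P = lin (\<lambda>z. F (toW z)) (zcoeff P)"
proof -
  assume P: "P \<in> A1"
  have "lin F P = lin F (lin (\<lambda>z. wd (toW z)) (zcoeff P))"
    using P by (simp add: liftZ_eq_lin[symmetric] finsupp_zcoeff valid_supp_zcoeff liftZ_zcoeff)
  also have "\<dots> = lin (\<lambda>z. F (toW z)) (zcoeff P)"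
    using P by (simp add: lin_lin finsupp_zcoeff)
  finally show ?thesis .
qed

lemma bil_liftZ_zcoeff:
  assumes P: "P \<in> A1" and Q: "Q \<in> A1"
  shows "bil (\<lambda>u v. liftZ (f (parse 1 u) (parse 1 v))) P Q = liftZ (bil f (zcoeff P) (zcoeff Q))"
proof -
  have valid: "z \<in> supp (zcoeff R) \<Longrightarrow> valid_zword z" for R z
    using valid_supp_zcoeff[of R] by (simp add: valid_supp_def)
  have "bil (\<lambda>u v. liftZ (f (parse 1 u) (parse 1 v))) P Q
      = lin (\<lambda>z. lin (\<lambda>z'. liftZ (f (parse 1 (toW z)) (parse 1 (toW z')))) (zcoeff Q)) (zcoeff P)"
    by (simp add: bil_lin lin_A1_zcoeff[OF P] lin_A1_zcoeff[OF Q])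
  also have "\<dots> = lin (\<lambda>z. lin (\<lambda>z'. liftZ (f z z')) (zcoeff Q)) (zcoeff P)"
    by (intro lin_cong) (simp add: valid)
  also have "\<dots> = liftZ (bil f (zcoeff P) (zcoeff Q))"
    by (simp add: bil_lin liftZ_lin)
  finally show ?thesis .
qed

lemma stuffle_conv: "P \<in> A1 \<Longrightarrow> Q \<in> A1 \<Longrightarrow> stuffle P Q = liftZ (zst (zcoeff P) (zcoeff Q))"
  unfolding stuffle_def by (rule bil_liftZ_zcoeff)

lemma stuffle_bar_conv: "P \<in> A1 \<Longrightarrow> Q \<in> A1 \<Longrightarrow> stuffle_bar P Q = liftZ (zst_bar (zcoeff P) (zcoeff Q))"
  unfolding stuffle_bar_def by (rule bil_liftZ_zcoeff)

lemma stuffle_dot_conv: "P \<in> A1 \<Longrightarrow> Q \<in> A1 \<Longrightarrow> stuffle_dot P Q = liftZ (zst_dot (zcoeff P) (zcoeff Q))"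
  unfolding stuffle_dot_def by (rule bil_liftZ_zcoeff)

lemma stuffle_bar_dot_conv:
  "P \<in> A1 \<Longrightarrow> Q \<in> A1 \<Longrightarrow> stuffle_bar_dot P Q = liftZ (zst_bar_dot (zcoeff P) (zcoeff Q))"
  unfolding stuffle_bar_dot_def by (rule bil_liftZ_zcoeff)

lemma supp_cons_poly: "supp (cons_poly a P) \<subseteq> (\<lambda>z. a # z) ` supp P"
proof
  fix z assume "z \<in> supp (cons_poly a P)"
  then obtain y where "z = a # y" "P y \<noteq> 0"
    by (cases z) (auto simp: supp_def cons_poly_def split: if_splits)
  then show "z \<in> (\<lambda>z. a # z) ` supp P" by (auto simp: supp_def)
qed

lemma supp_merge: "supp (merge a P) \<subseteq> {zadd a b # x | b x. b # x \<in> supp P}"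
proof
  fix z assume "z \<in> supp (merge a P)"
  then obtain u where u: "u \<in> supp P" "z \<in> supp (merge_word a u)"
    using supp_lin[of "merge_word a" P] by (auto simp: merge_def)
  then obtain b x where "u = b # x" by (cases u) (auto simp: supp_def)
  then have "z = zadd a b # x" "b # x \<in> supp P" using u by (auto simp: supp_def wd_def split: if_splits)
  then show "z \<in> {zadd a b # x | b x. b # x \<in> supp P}" by blast
qed

lemma valid_supp_wd: "valid_zword z \<Longrightarrow> valid_supp (wd z)"
  by (simp add: valid_supp_def)

lemma valid_supp_add: "valid_supp P \<Longrightarrow> valid_supp Q \<Longrightarrow> valid_supp (P + Q)"
  using supp_add by (fastforce simp: valid_supp_def)

lemma valid_supp_smul: "valid_supp P \<Longrightarrow> valid_supp (smul c P)"
  by (auto simp: valid_supp_def supp_def)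

lemma valid_supp_lin: "(\<And>z. z \<in> supp R \<Longrightarrow> valid_supp (f z)) \<Longrightarrow> valid_supp (lin f R)"
  using supp_lin[of f R] by (fastforce simp: valid_supp_def)

lemma valid_supp_cons_poly: "valid_supp P \<Longrightarrow> 1 \<le> fst a \<Longrightarrow> valid_supp (cons_poly a P)"
  using supp_cons_poly[of a P] by (cases a) (fastforce simp: valid_supp_def)

lemma valid_supp_merge: "valid_supp P \<Longrightarrow> valid_supp (merge a P)"
  using supp_merge[of a P] by (fastforce simp: valid_supp_def valid_zword_def zadd_def)

lemma valid_supp_zprod: "valid_zword x \<Longrightarrow> valid_zword y \<Longrightarrow> valid_supp (zprod c x y)"
proof (induction c x y rule: zprod.induct)
  case (3 c k s w l t v)
  then show ?case
    by (subst zprod_Cons_Cons)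
      (intro valid_supp_add valid_supp_cons_poly valid_supp_smul; simp add: zadd_def)
qed (simp_all add: valid_supp_wd)

lemma valid_supp_zdot: "valid_zword x \<Longrightarrow> valid_zword y \<Longrightarrow> valid_supp (zdot c x y)"
proof (cases x; cases y)
  fix a x' b y' assume "valid_zword x" "valid_zword y" "x = a # x'" "y = b # y'"
  then show ?thesis
    by (cases a; cases b) (simp add: zdot_Cons_Cons valid_supp_cons_poly valid_supp_zprod zadd_def)
qed (auto simp: valid_supp_wd)

lemma valid_supp_bil:
  assumes "valid_supp A" "valid_supp B" "\<And>x y. valid_zword x \<Longrightarrow> valid_zword y \<Longrightarrow> valid_supp (f x y)"
  shows "valid_supp (bil f A B)"
  unfolding bil_lin
proof (intro valid_supp_lin)
  fix x y assume "x \<in> supp A" "y \<in> supp B"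
  then have "valid_zword x" "valid_zword y" using assms(1,2) by (auto simp: valid_supp_def)
  then show "valid_supp (f x y)" by (rule assms(3))
qed

lemma valid_supp_contract_word: "valid_zword z \<Longrightarrow> valid_supp (contract_word c z)"
proof (induction z)
  case (Cons a u)
  obtain k s where a: "a = (k, s)" by (cases a)
  have "valid_zword u" "1 \<le> fst a" using Cons.prems a by auto
  then show ?case
    by (simp only: contract_word_Cons)
      (intro valid_supp_add valid_supp_cons_poly valid_supp_smul valid_supp_merge Cons.IH)
qed (simp add: valid_supp_wd)

lemma valid_supp_contract: "valid_supp R \<Longrightarrow> valid_supp (contract c R)"
  unfolding contract_def by (intro valid_supp_lin valid_supp_contract_word) (auto simp: valid_supp_def)

section \<open>\<open>d\<^sub>\<ast>\<close> in z-coordinates\<close>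

text \<open>The image under \<open>d\<^sub>s\<^sub>h\<close> of the word with z-coordinates \<open>v\<close>: as \<open>\<gamma>(y\<^sub>s) = x + y\<^sub>s\<close>, every letter
  \<open>z\<^sub>k\<^sub>,\<^sub>s\<close> but the last is either kept or turned into \<open>x\<^sup>k\<close>, which the following letter absorbs:
  a merge with \<open>(k, 0)\<close>.  For the last letter this is a merge into the empty word, which is \<open>0\<close>.\<close>

fun dsh_z :: "(nat \<times> 'g::ab_group_add) list \<Rightarrow> (nat \<times> 'g) list \<Rightarrow> rat" where
  "dsh_z [] = wd []"
| "dsh_z (a # v) = cons_poly a (dsh_z v) + merge (fst a, 0) (dsh_z v)"

lemma dsh_z_Cons [simp]: "dsh_z (a # v) = cons_poly a (dsh_z v) + merge (fst a, 0) (dsh_z v)"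
  by (rule ext) simp

declare dsh_z.simps(2) [simp del]

lemma finsupp_dsh_z [simp]: "finsupp (dsh_z v)"
  by (induction v) (simp_all only: dsh_z_Cons dsh_z.simps(1) finsupp_add finsupp_cons_poly
      finsupp_merge finsupp_wd)

definition valid_ne_supp :: "((nat \<times> 'g) list \<Rightarrow> rat) \<Rightarrow> bool" where
  "valid_ne_supp R \<longleftrightarrow> (\<forall>z\<in>supp R. valid_zword z \<and> z \<noteq> [])"

lemma valid_ne_supp_valid_supp: "valid_ne_supp P \<Longrightarrow> valid_supp P"
  by (simp add: valid_ne_supp_def valid_supp_def)

lemma valid_ne_supp_add: "valid_ne_supp P \<Longrightarrow> valid_ne_supp Q \<Longrightarrow> valid_ne_supp (P + Q)"
  using supp_add by (fastforce simp: valid_ne_supp_def)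

lemma valid_ne_supp_cons_poly: "valid_supp P \<Longrightarrow> 1 \<le> fst a \<Longrightarrow> valid_ne_supp (cons_poly a P)"
  using supp_cons_poly[of a P] by (cases a) (fastforce simp: valid_ne_supp_def valid_supp_def)

lemma valid_ne_supp_merge: "valid_ne_supp P \<Longrightarrow> valid_ne_supp (merge a P)"
  using supp_merge[of a P] by (fastforce simp: valid_ne_supp_def valid_zword_def zadd_def)

lemma valid_ne_supp_dsh_z: "valid_zword v \<Longrightarrow> v \<noteq> [] \<Longrightarrow> valid_ne_supp (dsh_z v)"
proof (induction v)
  case (Cons a v)
  obtain k q where a: "a = (k, q)" by (cases a)
  have "valid_supp (dsh_z v)"
  proof (cases "v = []")
    case True then show ?thesis by (simp add: valid_supp_def)
  next
    case False then show ?thesis using Cons a by (simp add: valid_ne_supp_valid_supp)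
  qed
  moreover have "valid_ne_supp (merge (k, 0) (dsh_z v))"
  proof (cases "v = []")
    case True then show ?thesis by (simp add: valid_ne_supp_def supp_def)
  next
    case False then show ?thesis using Cons a by (simp add: valid_ne_supp_merge)
  qed
  moreover have "1 \<le> k" using Cons.prems a by simp
  ultimately show ?case
    by (simp only: dsh_z_Cons a fst_conv) (intro valid_ne_supp_add valid_ne_supp_cons_poly; simp)
qed simp

lemma valid_supp_dsh_z: "valid_zword v \<Longrightarrow> valid_supp (dsh_z v)"
  by (cases "v = []") (auto simp: valid_supp_def
      intro: valid_ne_supp_dsh_z[THEN valid_ne_supp_valid_supp, unfolded valid_supp_def, rule_format])

lemma gamma_Y: "gamma (Y q # u) = cons_poly X (gamma u) + cons_poly (Y q) (gamma u)"
  by (rule ext) simp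

declare gamma.simps(3) [simp del]

lemma snoc_cons_poly: "snoc_poly a (cons_poly b P) = cons_poly b (snoc_poly a P)"
proof (rule ext)
  fix v show "snoc_poly a (cons_poly b P) v = cons_poly b (snoc_poly a P) v"
  proof (cases v)
    case Nil then show ?thesis by (simp add: snoc_poly_def cons_poly_def)
  next
    case (Cons c v')
    then show ?thesis by (cases "v' = []") (auto simp: snoc_poly_def cons_poly_def)
  qed
qed

lemma snoc_poly_add: "snoc_poly a (P + Q) = snoc_poly a P + snoc_poly a Q"
  by (rule ext) (simp add: snoc_poly_def)

lemma snoc_poly_wd: "snoc_poly a (wd u) = wd (u @ [a])"
  by (rule ext) (auto simp: snoc_poly_def wd_def)

lemma funpow_cons_X_wd: "(cons_poly X ^^ m) (wd u) = wd (replicate m X @ u)"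
  by (induction m) auto

lemma gamma_replicate_X: "gamma (replicate m X @ u) = (cons_poly X ^^ m) (gamma u)"
  by (induction m) auto

lemma snoc_funpow_cons_X: "snoc_poly a ((cons_poly X ^^ m) P) = (cons_poly X ^^ m) (snoc_poly a P)"
  by (induction m) (auto simp: snoc_cons_poly)

lemma finsupp_snoc_poly [simp]: "finsupp P \<Longrightarrow> finsupp (snoc_poly a P)"
proof -
  assume P: "finsupp P"
  have "supp (snoc_poly a P) \<subseteq> (\<lambda>u. u @ [a]) ` supp P"
  proof
    fix v assume "v \<in> supp (snoc_poly a P)"
    then have "v \<noteq> []" "last v = a" "P (butlast v) \<noteq> 0"
      by (auto simp: supp_def snoc_poly_def split: if_splits)
    then show "v \<in> (\<lambda>u. u @ [a]) ` supp P"
      by (intro image_eqI[where x="butlast v"]) (auto simp: supp_def)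
  qed
  then show ?thesis using P by (meson finite_imageI finite_subset)
qed

lemma finsupp_gamma [simp]: "finsupp (gamma u)"
proof (induction u)
  case (Cons a u)
  then show ?case by (cases a) (simp_all only: gamma_Y gamma.simps finsupp_add finsupp_cons_poly)
qed simp

lemma finsupp_dsh_word [simp]: "finsupp (dsh_word u)"
proof (cases "u = []")
  case False
  have "finsupp (\<lambda>_. 0 :: rat)" by (simp add: supp_def)
  with False show ?thesis by (cases "last u") (simp_all add: dsh_word_def)
qed (simp add: dsh_word_def)

lemma merge_zero_letter: "finsupp R \<Longrightarrow> valid_ne_supp R \<Longrightarrow> merge (0, 0) R = R"
proof -
  assume R: "finsupp R" "valid_ne_supp R"
  have "merge (0, 0) R = lin wd R"
    unfolding merge_def
  proof (rule lin_cong)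
    fix z assume "z \<in> supp R"
    then have "z \<noteq> []" using R by (auto simp: valid_ne_supp_def)
    then show "merge_word (0, 0) z = wd z" by (cases z) (auto simp: zadd_def)
  qed
  then show ?thesis using R by (simp add: lin_wd_id)
qed

lemma cons_X_liftZ:
  assumes R: "finsupp R" "valid_ne_supp R"
  shows "cons_poly X (liftZ R) = liftZ (merge (1, 0) R)"
proof -
  have "cons_poly X (liftZ R) = cons_poly X (lin (\<lambda>z. wd (toW z)) R)"
    using R by (simp add: liftZ_eq_lin valid_ne_supp_valid_supp)
  also have "\<dots> = lin (\<lambda>z. cons_poly X (wd (toW z))) R"
    by (rule lin_map_apply_lin) (use R in auto)
  also have "\<dots> = lin (\<lambda>z. lin (\<lambda>z. wd (toW z)) (merge_word (1, 0) z)) R"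
  proof (rule lin_cong)
    fix z assume "z \<in> supp R"
    then obtain l t x where z: "z = (l, t) # x" "1 \<le> l" "valid_zword x"
      using R by (cases z) (auto simp: valid_ne_supp_def)
    then obtain l' where "l = Suc l'" by (cases l) auto
    then show "cons_poly X (wd (toW z)) = lin (\<lambda>z. wd (toW z)) (merge_word (1, 0) z)"
      using z by (simp add: zadd_def)
  qed
  also have "\<dots> = lin (\<lambda>z. wd (toW z)) (merge (1, 0) R)"
    by (simp add: merge_def lin_lin R)
  also have "\<dots> = liftZ (merge (1, 0) R)"
    using R by (simp add: liftZ_eq_lin valid_ne_supp_valid_supp valid_ne_supp_merge)
  finally show ?thesis .
qed

lemma cons_Y_liftZ:
  assumes R: "finsupp R" "valid_supp R"
  shows "cons_poly (Y q) (liftZ R) = liftZ (cons_poly (1, q) R)"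
proof -
  have "cons_poly (Y q) (liftZ R) = cons_poly (Y q) (lin (\<lambda>z. wd (toW z)) R)"
    using R by (simp add: liftZ_eq_lin)
  also have "\<dots> = lin (\<lambda>z. cons_poly (Y q) (wd (toW z))) R"
    by (rule lin_map_apply_lin) (use R in auto)
  also have "\<dots> = lin (\<lambda>z. wd (toW z)) (cons_poly (1, q) R)"
    using R by (simp add: cons_poly_lin lin_lin)
  also have "\<dots> = liftZ (cons_poly (1, q) R)"
    using R by (simp add: liftZ_eq_lin valid_ne_supp_valid_supp valid_ne_supp_cons_poly)
  finally show ?thesis .
qed

lemma funpow_cons_X_liftZ:
  "finsupp R \<Longrightarrow> valid_ne_supp R \<Longrightarrow> (cons_poly X ^^ m) (liftZ R) = liftZ (merge (m, 0) R)"
proof (induction m)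
  case 0 then show ?case by (simp add: merge_zero_letter)
next
  case (Suc m)
  have "(cons_poly X ^^ Suc m) (liftZ R) = cons_poly X (liftZ (merge (m, 0) R))" using Suc by simp
  also have "\<dots> = liftZ (merge (1, 0) (merge (m, 0) R))"
    using Suc.prems by (simp add: cons_X_liftZ valid_ne_supp_merge)
  also have "\<dots> = liftZ (merge (Suc m, 0) R)" using Suc.prems by (simp add: merge_merge zadd_def)
  finally show ?case .
qed

lemma dsh_word_toW: "valid_zword v \<Longrightarrow> dsh_word (toW v) = liftZ (dsh_z v)"
proof (induction v)
  case Nil then show ?case by (simp add: dsh_word_def liftZ_wd)
next
  case (Cons a v)
  obtain k q where a: "a = (k, q)" by (cases a)
  have k: "1 \<le> k" and v: "valid_zword v" using Cons.prems a by auto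
  show ?case
  proof (cases "v = []")
    case True
    have "dsh_word (toW (a # v)) = snoc_poly (Y q) (gamma (replicate (k - 1) X))"
      using True a by (simp add: dsh_word_def butlast_append)
    also have "\<dots> = wd (replicate (k - 1) X @ [Y q])"
    proof -
      have g: "gamma (replicate (k - 1) X) = wd (replicate (k - 1) X)"
        using gamma_replicate_X[of "k - 1" "[]"] by (simp add: funpow_cons_X_wd)
      show ?thesis by (simp only: g snoc_poly_wd)
    qed
    also have "\<dots> = liftZ (dsh_z (a # v))"
      using True a k by (simp add: liftZ_wd)
    finally show ?thesis .
  next
    case False
    obtain t where t: "last (toW v) = Y t" using last_toW[OF v False] by blast
    have ne: "toW v \<noteq> []" using toW_not_Nil[OF False] .
    define D where "D = dsh_z v"
    have D: "valid_ne_supp D" "finsupp D" using valid_ne_supp_dsh_z[OF v False] by (simp_all add: D_def)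
    have IH: "snoc_poly (Y t) (gamma (butlast (toW v))) = liftZ D"
      using Cons.IH[OF v] ne t by (simp add: dsh_word_def D_def)
    have "dsh_word (toW (a # v))
        = snoc_poly (Y t) (gamma (replicate (k - 1) X @ Y q # butlast (toW v)))"
      using a ne t by (simp add: dsh_word_def butlast_append)
    also have "\<dots> = (cons_poly X ^^ (k - 1)) (cons_poly X (liftZ D) + cons_poly (Y q) (liftZ D))"
      by (simp add: gamma_replicate_X gamma_Y snoc_funpow_cons_X snoc_poly_add snoc_cons_poly IH)
    also have "\<dots> = (cons_poly X ^^ (k - 1)) (liftZ (merge (1, 0) D + cons_poly (1, q) D))"
      using D by (simp add: cons_X_liftZ cons_Y_liftZ valid_ne_supp_valid_supp liftZ_add)
    also have "\<dots> = liftZ (merge (k - 1, 0) (merge (1, 0) D + cons_poly (1, q) D))"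
      using D by (intro funpow_cons_X_liftZ)
        (simp_all add: valid_ne_supp_add valid_ne_supp_merge valid_ne_supp_cons_poly
          valid_ne_supp_valid_supp)
    also have "\<dots> = liftZ (merge (k, 0) D + cons_poly (k, q) D)"
      using D k by (simp add: merge_merge merge_cons_poly zadd_def)
    also have "\<dots> = liftZ (dsh_z (a # v))"
      by (simp add: a D_def add.commute)
    finally show ?thesis .
  qed
qed

definition Iinv_z :: "'g::ab_group_add \<Rightarrow> ((nat \<times> 'g) list \<Rightarrow> rat) \<Rightarrow> (nat \<times> 'g) list \<Rightarrow> rat" where
  "Iinv_z p = lin (\<lambda>z. wd (Iinvz_aux p z))"

lemma valid_zword_Iz [simp]: "valid_zword (Iz_aux p z) = valid_zword z"
  by (induction p z rule: Iz_aux.induct) auto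

lemma valid_zword_Iinvz [simp]: "valid_zword (Iinvz_aux p z) = valid_zword z"
  by (induction p z rule: Iinvz_aux.induct) auto

lemma lin_map_Iinv_z [intro]: "lin_map (Iinv_z p)"
  by (simp add: Iinv_z_def lin_map_lin)

lemma fin_map_Iinv_z [intro]: "fin_map (Iinv_z p)"
  by (simp add: fin_map_def Iinv_z_def)

lemma Iinv_z_add [simp]: "finsupp P \<Longrightarrow> finsupp Q \<Longrightarrow> Iinv_z p (P + Q) = Iinv_z p P + Iinv_z p Q"
  by (simp add: Iinv_z_def lin_add)

lemma Iinv_z_cons_poly: "finsupp D \<Longrightarrow> Iinv_z p (cons_poly (k, q) D) = cons_poly (k, q - p) (Iinv_z q D)"
proof (rule lin_map_eq[where F="\<lambda>D. Iinv_z p (cons_poly (k, q) D)"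
      and G="\<lambda>D. cons_poly (k, q - p) (Iinv_z q D)"])
  show "Iinv_z p (cons_poly (k, q) (wd x)) = cons_poly (k, q - p) (Iinv_z q (wd x))" for x
    by (simp add: Iinv_z_def)
qed (rule lin_map_comp; auto)+

text \<open>The right-hand side does not depend on \<open>q\<close>: the first letter of \<open>Iinv_z q D\<close> carries the
  label \<open>t - q\<close>, and the merge turns it into \<open>t - p\<close>.\<close>

lemma Iinv_z_merge: "finsupp D \<Longrightarrow> Iinv_z p (merge (k, 0) D) = merge (k, q - p) (Iinv_z q D)"
proof (rule lin_map_eq[where F="\<lambda>D. Iinv_z p (merge (k, 0) D)"
      and G="\<lambda>D. merge (k, q - p) (Iinv_z q D)"])
  show "Iinv_z p (merge (k, 0) (wd x)) = merge (k, q - p) (Iinv_z q (wd x))" for x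
    by (cases x) (auto simp: Iinv_z_def zadd_def)
qed (rule lin_map_comp; auto)+

lemma Iinv_z_dsh_z_Iz: "Iinv_z p (dsh_z (Iz_aux p z)) = contract_word 1 z"
proof (induction z arbitrary: p)
  case Nil then show ?case by (simp add: Iinv_z_def)
next
  case (Cons a u)
  obtain k s where a: "a = (k, s)" by (cases a)
  let ?D = "dsh_z (Iz_aux (p + s) u)"
  have "Iinv_z p (dsh_z (Iz_aux p (a # u))) = Iinv_z p (cons_poly (k, p + s) ?D + merge (k, 0) ?D)"
    by (simp add: a)
  also have "\<dots> = cons_poly (k, s) (Iinv_z (p + s) ?D) + merge (k, s) (Iinv_z (p + s) ?D)"
    by (simp add: Iinv_z_cons_poly Iinv_z_merge[where q="p + s"])
  also have "\<dots> = contract_word 1 (a # u)" by (simp add: Cons a)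
  finally show ?case .
qed

lemma Iinv_liftZ: "finsupp R \<Longrightarrow> valid_supp R \<Longrightarrow> Iinv (liftZ R) = liftZ (Iinv_z 0 R)"
proof -
  assume R: "finsupp R" "valid_supp R"
  have "Iinv (liftZ R) = lin (\<lambda>z. Iinv (wd (toW z))) R"
    unfolding Iinv_def using R by (simp add: liftZ_eq_lin lin_map_apply_lin lin_map_lin)
  also have "\<dots> = lin (\<lambda>z. liftZ (wd (Iinvz_aux 0 z))) R"
    using R by (intro lin_cong) (simp add: valid_supp_def Iinv_def liftZ_wd)
  also have "\<dots> = liftZ (Iinv_z 0 R)" by (simp add: Iinv_z_def liftZ_lin)
  finally show ?thesis .
qed

lemma Iinv_dsh_word_Iz:
  "valid_zword z \<Longrightarrow> Iinv (dsh_word (toW (Iz_aux 0 z))) = liftZ (contract_word 1 z)"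
  by (simp add: dsh_word_toW Iinv_liftZ valid_supp_dsh_z Iinv_z_dsh_z_Iz)

lemma dstar_eq_contract: "P \<in> A1 \<Longrightarrow> dstar P = liftZ (contract 1 (zcoeff P))"
proof -
  assume P: "P \<in> A1"
  have valid: "z \<in> supp (zcoeff P) \<Longrightarrow> valid_zword z" for z
    using valid_supp_zcoeff[of P] by (auto simp: valid_supp_def)
  have "Imap P = lin (\<lambda>z. wd (toW (Iz_aux 0 z))) (zcoeff P)"
    unfolding Imap_def lin_A1_zcoeff[OF P] by (rule lin_cong) (simp add: valid)
  then have "dstar P = lin (\<lambda>z. Iinv (dsh_word (toW (Iz_aux 0 z)))) (zcoeff P)"
    using P finsupp_zcoeff[OF P]
    by (simp add: dstar_def dsh_def Iinv_def lin_map_apply_lin lin_map_lin lin_lin)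
  also have "\<dots> = lin (\<lambda>z. liftZ (contract_word 1 z)) (zcoeff P)"
    by (rule lin_cong) (simp add: valid Iinv_dsh_word_Iz)
  also have "\<dots> = liftZ (contract 1 (zcoeff P))" by (simp add: contract_def liftZ_lin)
  finally show ?thesis .
qed

lemma dstar_A1: "P \<in> A1 \<Longrightarrow> dstar P \<in> A1"
  by (simp add: dstar_eq_contract liftZ_A1 finsupp_zcoeff)

lemma zcoeff_dstar: "P \<in> A1 \<Longrightarrow> zcoeff (dstar P) = contract 1 (zcoeff P)"
  by (simp add: dstar_eq_contract zcoeff_liftZ valid_supp_contract valid_supp_zcoeff)

lemma bij_betw_dstar: "bij_betw dstar A1 A1"
proof (rule bij_betw_byWitness[where f' = "\<lambda>Q. liftZ (contract (-1) (zcoeff Q))"])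
  show "\<forall>P\<in>A1. liftZ (contract (-1) (zcoeff (dstar P))) = P"
    by (simp add: zcoeff_dstar contract_inverse[of _ "-1", simplified] finsupp_zcoeff liftZ_zcoeff)
  show "\<forall>Q\<in>A1. dstar (liftZ (contract (-1) (zcoeff Q))) = Q"
    by (simp add: dstar_eq_contract liftZ_A1 finsupp_zcoeff zcoeff_liftZ valid_supp_contract
        valid_supp_zcoeff contract_inverse liftZ_zcoeff)
  show "dstar ` A1 \<subseteq> A1" by (auto simp: dstar_A1)
  show "(\<lambda>Q. liftZ (contract (-1) (zcoeff Q))) ` A1 \<subseteq> A1" by (auto simp: liftZ_A1 finsupp_zcoeff)
qed

lemma dstar_inv_A1: "w \<in> A1 \<Longrightarrow> dstar_inv w \<in> A1"
  unfolding dstar_inv_def using bij_betw_dstar by (metis bij_betw_imp_surj_on inv_into_into)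

lemma dstar_dstar_inv: "w \<in> A1 \<Longrightarrow> dstar (dstar_inv w) = w"
  unfolding dstar_inv_def using bij_betw_dstar by (metis bij_betw_imp_surj_on f_inv_into_f)

lemma dstar_inv_dstar: "P \<in> A1 \<Longrightarrow> dstar_inv (dstar P) = P"
  unfolding dstar_inv_def using bij_betw_dstar by (metis bij_betw_imp_inj_on inv_into_f_f)

lemma dstar_stuffle_bar:
  assumes "P \<in> A1" "Q \<in> A1"
  shows "dstar (stuffle_bar P Q) = stuffle (dstar P) (dstar Q)"
proof -
  have "dstar (stuffle_bar P Q) = liftZ (contract 1 (zst_bar (zcoeff P) (zcoeff Q)))"
    using assms by (simp add: stuffle_bar_conv dstar_eq_contract liftZ_A1 zcoeff_liftZ finsupp_zcoeff
        valid_supp_bil valid_supp_zcoeff valid_supp_zprod)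
  also have "\<dots> = liftZ (zst (contract 1 (zcoeff P)) (contract 1 (zcoeff Q)))"
    using assms by (simp add: contract_zst_bar finsupp_zcoeff)
  also have "\<dots> = stuffle (dstar P) (dstar Q)"
    using assms by (simp add: stuffle_conv dstar_A1 zcoeff_dstar)
  finally show ?thesis .
qed

lemma dstar_stuffle_bar_dot:
  assumes "P \<in> A1" "Q \<in> A1"
  shows "dstar (stuffle_bar_dot P Q) = stuffle_dot (dstar P) (dstar Q)"
proof -
  have "dstar (stuffle_bar_dot P Q) = liftZ (contract 1 (zst_bar_dot (zcoeff P) (zcoeff Q)))"
    using assms by (simp add: stuffle_bar_dot_conv dstar_eq_contract liftZ_A1 zcoeff_liftZ
        finsupp_zcoeff valid_supp_bil valid_supp_zcoeff valid_supp_zdot)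
  also have "\<dots> = liftZ (zst_dot (contract 1 (zcoeff P)) (contract 1 (zcoeff Q)))"
    using assms by (simp add: contract_zst_bar_dot finsupp_zcoeff)
  also have "\<dots> = stuffle_dot (dstar P) (dstar Q)"
    using assms by (simp add: stuffle_dot_conv dstar_A1 zcoeff_dstar)
  finally show ?thesis .
qed

lemma stuffle_bar_A1: "P \<in> A1 \<Longrightarrow> Q \<in> A1 \<Longrightarrow> stuffle_bar P Q \<in> A1"
  by (simp add: stuffle_bar_conv liftZ_A1 finsupp_zcoeff)

lemma stuffle_bar_dot_A1: "P \<in> A1 \<Longrightarrow> Q \<in> A1 \<Longrightarrow> stuffle_bar_dot P Q \<in> A1"
  by (simp add: stuffle_bar_dot_conv liftZ_A1 finsupp_zcoeff)

theorem lemma3p12: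
  fixes w w' :: "('g::ab_group_add) poly"
  assumes "w \<in> A1" and "w' \<in> A1"
  shows "dstar (stuffle_bar w w') = stuffle (dstar w) (dstar w') \<and>
         dstar_inv (stuffle w w') = stuffle_bar (dstar_inv w) (dstar_inv w') \<and>
         dstar (stuffle_bar_dot w w') = stuffle_dot (dstar w) (dstar w') \<and>
         dstar_inv (stuffle_dot w w') = stuffle_bar_dot (dstar_inv w) (dstar_inv w')"
proof (intro conjI)
  show "dstar (stuffle_bar w w') = stuffle (dstar w) (dstar w')"
    using assms by (rule dstar_stuffle_bar)
  show "dstar (stuffle_bar_dot w w') = stuffle_dot (dstar w) (dstar w')"
    using assms by (rule dstar_stuffle_bar_dot)
  let ?v = "dstar_inv w" and ?v' = "dstar_inv w'"
  have v: "?v \<in> A1" "?v' \<in> A1" "dstar ?v = w" "dstar ?v' = w'"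
    using assms by (simp_all add: dstar_inv_A1 dstar_dstar_inv)
  have "stuffle w w' = dstar (stuffle_bar ?v ?v')"
    using dstar_stuffle_bar[OF v(1,2)] by (simp add: v)
  then show "dstar_inv (stuffle w w') = stuffle_bar ?v ?v'"
    by (simp add: dstar_inv_dstar stuffle_bar_A1 v)
  have "stuffle_dot w w' = dstar (stuffle_bar_dot ?v ?v')"
    using dstar_stuffle_bar_dot[OF v(1,2)] by (simp add: v)
  then show "dstar_inv (stuffle_dot w w') = stuffle_bar_dot ?v ?v'"
    by (simp add: dstar_inv_dstar stuffle_bar_dot_A1 v)
qed

end
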